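(* Let $q > 1$ be an integer. For all positive integers $n$ and $M$, $$|C(n,q,M+1)| \geq q\cdot|C(n,q,M)|.$$
   Context: Fix the alphabet $\{x_0,\ldots,x_{q-1}\}$ of $q$ letters. A word $W$ is an instance of a word $V = y_0y_1\cdots y_{m-1}$ (each $y_i$ a letter) if $W = A_0A_1\cdots A_{m-1}$ with each $A_i$ a nonempty word and $A_i = A_j$ whenever $y_i = y_j$. The Zimin words are defined by $Z_0 := \varepsilon$ (the empty word) and $Z_{n+1} := Z_n z_n Z_n$ for distinct letters $z_0,z_1,\dots$ (so $Z_1 = a$, $Z_2 = aba$, $Z_3=abacaba$). $C(n,q,M)$ denotes the set of words $W \in \{x_0,\ldots,x_{q-1}\}^M$ that are instances of $Z_n$. *)

theory Defs
  imports Main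
begin

text \<open>Words over the alphabet {x_0,...,x_(q-1)} are lists of naturals with entries < q.
  Patterns (such as Zimin words) are lists over an arbitrary letter type.\<close>

definition is_instance :: "'b list \<Rightarrow> 'a list \<Rightarrow> bool" where
  "is_instance W V \<longleftrightarrow>
     (\<exists>f :: 'a \<Rightarrow> 'b list. (\<forall>y \<in> set V. f y \<noteq> []) \<and> W = concat (map f V))"

fun zimin :: "nat \<Rightarrow> nat list" where
  "zimin 0 = []"
| "zimin (Suc n) = zimin n @ [n] @ zimin n"

definition C :: "nat \<Rightarrow> nat \<Rightarrow> nat \<Rightarrow> nat list set" where
  "C n q M = {W. length W = M \<and> set W \<subseteq> {..<q} \<and> is_instance W (zimin n)}"

end

theory Submission
  imports Defs
begin

text \<open>Every instance of \<open>Z\<^sub>k\<^sub>+\<^sub>1\<close> has the shape \<open>U v U\<close> with a nonempty middle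
  block \<open>v\<close>, and the middle position of the word always falls inside \<open>v\<close>. Inserting an
  arbitrary letter there keeps the shape, and it is injective on pairs (word of length \<open>M\<close>,
  letter), which gives \<open>q\<close> distinct instances of length \<open>M + 1\<close> for every instance of
  length \<open>M\<close>.\<close>

definition insert_at :: "nat \<Rightarrow> 'a \<Rightarrow> 'a list \<Rightarrow> 'a list" where
  "insert_at i a xs = take i xs @ a # drop i xs"

lemma length_insert_at [simp]: "length (insert_at i a xs) = Suc (length xs)"
  unfolding insert_at_def by simp

lemma set_insert_at: "set (insert_at i a xs) \<subseteq> insert a (set xs)"
  unfolding insert_at_def by (auto dest: in_set_takeD in_set_dropD)

lemma insert_at_eq_iff:
  assumes "length xs = length ys"
  shows "insert_at i a xs = insert_at i b ys \<longleftrightarrow> xs = ys \<and> a = b"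
proof -
  have "length (take i xs) = length (take i ys)" using assms by simp
  then have "insert_at i a xs = insert_at i b ys \<longleftrightarrow>
      take i xs = take i ys \<and> a = b \<and> drop i xs = drop i ys"
    unfolding insert_at_def by (simp add: append_eq_append_conv)
  then show ?thesis by (metis append_take_drop_id)
qed

lemma insert_at_middle:
  assumes "length U \<le> i" and "i \<le> length U + length v"
  shows "insert_at i a (U @ v @ U) = U @ insert_at (i - length U) a v @ U"
  using assms unfolding insert_at_def by auto

lemma zimin_set: "set (zimin k) \<subseteq> {..<k}"
  by (induction k) auto

lemma is_instance_zimin_Suc_iff:
  "is_instance W (zimin (Suc k)) \<longleftrightarrow>
     (\<exists>U v. is_instance U (zimin k) \<and> v \<noteq> [] \<and> W = U @ v @ U)"
proof
  assume "is_instance W (zimin (Suc k))"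
  then obtain f where f: "\<forall>y \<in> set (zimin (Suc k)). f y \<noteq> []"
    and W: "W = concat (map f (zimin (Suc k)))"
    unfolding is_instance_def by blast
  have "is_instance (concat (map f (zimin k))) (zimin k)"
    unfolding is_instance_def using f by auto
  with f W show "\<exists>U v. is_instance U (zimin k) \<and> v \<noteq> [] \<and> W = U @ v @ U"
    by auto
next
  assume "\<exists>U v. is_instance U (zimin k) \<and> v \<noteq> [] \<and> W = U @ v @ U"
  then obtain U v f where v: "v \<noteq> []" and W: "W = U @ v @ U"
    and f: "\<forall>y \<in> set (zimin k). f y \<noteq> []" and U: "U = concat (map f (zimin k))"
    unfolding is_instance_def by blast
  have "k \<notin> set (zimin k)" using zimin_set by auto
  then have "concat (map (f(k := v)) (zimin k)) = U"
    unfolding U by (intro arg_cong[where f = concat] map_cong) auto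
  then show "is_instance W (zimin (Suc k))"
    unfolding is_instance_def using f v W by (intro exI[of _ "f(k := v)"]) auto
qed

lemma is_instance_zimin_insert_at_middle:
  assumes "is_instance W (zimin (Suc k))"
  shows "is_instance (insert_at (length W div 2) a W) (zimin (Suc k))"
proof -
  obtain U v where U: "is_instance U (zimin k)" and v: "v \<noteq> []" and W: "W = U @ v @ U"
    using assms is_instance_zimin_Suc_iff by blast
  have "length U \<le> length W div 2" "length W div 2 \<le> length U + length v"
    using v unfolding W by (cases v; simp)+
  then have "insert_at (length W div 2) a W = U @ insert_at (length W div 2 - length U) a v @ U"
    unfolding W by (rule insert_at_middle)
  moreover have "insert_at (length W div 2 - length U) a v \<noteq> []"
    unfolding insert_at_def by simp
  ultimately show ?thesis
    unfolding is_instance_zimin_Suc_iff using U by blast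
qed

lemma finite_C: "finite (C n q M)"
proof (rule finite_subset)
  show "C n q M \<subseteq> {xs. set xs \<subseteq> {..<q} \<and> length xs = M}"
    unfolding C_def by auto
  show "finite {xs. set xs \<subseteq> {..<q} \<and> length xs = M}"
    by (rule finite_lists_length_eq) simp
qed

lemma insert_at_middle_C:
  assumes "W \<in> C (Suc k) q M" and "a < q"
  shows "insert_at (M div 2) a W \<in> C (Suc k) q (M + 1)"
  using assms set_insert_at[of "M div 2" a W] is_instance_zimin_insert_at_middle[of W k a]
  unfolding C_def by auto

theorem mainTheorem3:
  fixes q n M :: nat
  assumes "q > 1" and "n > 0" and "M > 0"
  shows "card (C n q (M + 1)) \<ge> q * card (C n q M)"
proof -
  obtain k where n: "n = Suc k" using assms(2) by (cases n) auto
  define g where "g = (\<lambda>(W, a :: nat). insert_at (M div 2) a W)"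
  have "inj_on g (C n q M \<times> {..<q})"
  proof (rule inj_onI, clarify)
    fix W a W' b
    assume "W \<in> C n q M" "W' \<in> C n q M" "g (W, a) = g (W', b)"
    then show "W = W' \<and> a = b"
      unfolding g_def C_def by (simp add: insert_at_eq_iff)
  qed
  moreover have "g ` (C n q M \<times> {..<q}) \<subseteq> C n q (M + 1)"
    unfolding n g_def using insert_at_middle_C by auto
  ultimately have "card (C n q M \<times> {..<q}) \<le> card (C n q (M + 1))"
    using finite_C by (rule card_inj_on_le)
  then show ?thesis by (simp add: card_cartesian_product mult.commute)
qed

end
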